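(* Let $(X,T)$ be a topological dynamical system and fix the system of coefficients $c_S^n=2^{-n}$. Then for any open cover $\mathscr U$ of $X$, $\operatorname{Acc}(X,\mathscr U,T)=\frac12\operatorname{Asc}(X,\mathscr U,T)$.
   Context: $(X,T)$: compact Hausdorff $X$, continuous $T$. $n^*=\{0,\dots,n-1\}$; $\mathscr U_S=\bigvee_{i\in S}T^{-i}\mathscr U$ ($\mathscr U_\emptyset=\{X\}$); $N(\mathscr U)$ is the minimal cardinality of a subcover. $\operatorname{Asc}(X,\mathscr U,T)=\lim_{n\to\infty}\frac1n\sum_{S\subset n^*}c_S^n\log N(\mathscr U_S)$ and the average configuration complexity is $\operatorname{Acc}(X,\mathscr U,T)=\lim_{n\to\infty}\frac1n\sum_{S\subset n^*,\,0\in S}c_S^n\log N(\mathscr U_S)$. *)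

theory Defs
  imports "HOL-Analysis.Analysis"
begin

definition iter_preimage :: "'a topology \<Rightarrow> ('a \<Rightarrow> 'a) \<Rightarrow> nat \<Rightarrow> 'a set \<Rightarrow> 'a set" where
  "iter_preimage X T i A = {x \<in> topspace X. (T ^^ i) x \<in> A}"

definition join_cover :: "'a topology \<Rightarrow> ('a \<Rightarrow> 'a) \<Rightarrow> 'a set set \<Rightarrow> nat set \<Rightarrow> 'a set set" where
  "join_cover X T U S =
     {topspace X \<inter> (\<Inter>i\<in>S. iter_preimage X T i (f i)) | f. \<forall>i\<in>S. f i \<in> U}"

definition cover_num :: "'a topology \<Rightarrow> 'a set set \<Rightarrow> nat" where
  "cover_num X V = (LEAST k. \<exists>W\<subseteq>V. finite W \<and> card W = k \<and> \<Union>W = topspace X)"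

definition open_cover :: "'a topology \<Rightarrow> 'a set set \<Rightarrow> bool" where
  "open_cover X U \<longleftrightarrow> (\<forall>V\<in>U. openin X V) \<and> \<Union>U = topspace X"

definition asc_seq :: "(nat \<Rightarrow> nat set \<Rightarrow> real) \<Rightarrow> 'a topology \<Rightarrow> ('a \<Rightarrow> 'a) \<Rightarrow> 'a set set \<Rightarrow> nat \<Rightarrow> real" where
  "asc_seq c X T U n = (1 / real n) * (\<Sum>S\<in>Pow {..<n}. c n S * ln (real (cover_num X (join_cover X T U S))))"

definition acc_seq :: "(nat \<Rightarrow> nat set \<Rightarrow> real) \<Rightarrow> 'a topology \<Rightarrow> ('a \<Rightarrow> 'a) \<Rightarrow> 'a set set \<Rightarrow> nat \<Rightarrow> real" where
  "acc_seq c X T U n = (1 / real n) * (\<Sum>S\<in>{S. S \<subseteq> {..<n} \<and> 0 \<in> S}. c n S * ln (real (cover_num X (join_cover X T U S))))"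

definition Asc :: "(nat \<Rightarrow> nat set \<Rightarrow> real) \<Rightarrow> 'a topology \<Rightarrow> ('a \<Rightarrow> 'a) \<Rightarrow> 'a set set \<Rightarrow> real" where
  "Asc c X T U = lim (asc_seq c X T U)"

definition Acc :: "(nat \<Rightarrow> nat set \<Rightarrow> real) \<Rightarrow> 'a topology \<Rightarrow> ('a \<Rightarrow> 'a) \<Rightarrow> 'a set set \<Rightarrow> real" where
  "Acc c X T U = lim (acc_seq c X T U)"

end

theory Submission
  imports Defs
begin

text \<open>Write \<open>a S = log N(\<U>\<^sub>S)\<close>. The set function \<open>a\<close> is monotone, subadditive on
disjoint sets and does not increase under translation of \<open>S\<close>. Splitting subsets of
\<open>{0..<n+m}\<close> into their parts below and above \<open>n\<close> shows that \<open>e n = 2\<^sup>-\<^sup>n \<Sum>\<^bsub>S \<subseteq> n\<^sup>*\<^esub> a S\<close>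
is subadditive, so \<open>e n / n\<close> converges by Fekete's lemma; this is \<open>Asc\<close>. Pairing every
\<open>S\<close> with \<open>0 \<notin> S\<close> with \<open>insert 0 S\<close> shows that the subsets containing \<open>0\<close> carry half of
the total weight up to an error of at most \<open>2\<^sup>n a {0}\<close>, which vanishes after
normalising by \<open>2\<^sup>n n\<close>.\<close>

lemma subadditive_mult_add_le:
  fixes e :: "nat \<Rightarrow> real"
  assumes "\<And>m n. e (m + n) \<le> e m + e n"
  shows "e (q * k + r) \<le> real q * e k + e r"
proof (induction q)
  case (Suc q)
  have "e (Suc q * k + r) = e (k + (q * k + r))" by (simp add: add.assoc)
  also have "\<dots> \<le> e k + e (q * k + r)" by (rule assms)
  also have "\<dots> \<le> e k + (real q * e k + e r)" using Suc by simp
  finally show ?case by (simp add: algebra_simps)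
qed simp

lemma fekete_convergent:
  fixes e :: "nat \<Rightarrow> real"
  assumes nonneg: "\<And>n. 0 \<le> e n" and subadd: "\<And>m n. e (m + n) \<le> e m + e n"
  shows "convergent (\<lambda>n. e n / real n)"
proof -
  define Q where "Q = (\<lambda>n. e n / real n) ` {1..}"
  define L where "L = Inf Q"
  have bdd: "bdd_below Q" unfolding Q_def using nonneg by (auto intro!: bdd_belowI[of _ 0])
  have L_le: "L \<le> e n / real n" if "n \<ge> 1" for n
    unfolding L_def using that bdd by (auto simp: Q_def intro!: cInf_lower)
  have "(\<lambda>n. e n / real n) \<longlonglongrightarrow> L"
  proof (rule LIMSEQ_I)
    fix \<epsilon> :: real assume "\<epsilon> > 0"
    have "Q \<noteq> {}" "Inf Q < L + \<epsilon>/2" using \<open>\<epsilon> > 0\<close> by (auto simp: Q_def L_def)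
    then obtain x where "x \<in> Q" "x < L + \<epsilon>/2" using cInf_lessD by blast
    then obtain k where k: "k \<ge> 1" "e k / real k < L + \<epsilon>/2" unfolding Q_def by auto
    define M where "M = (\<Sum>r<k. e r)"
    obtain N :: nat where N: "M / (\<epsilon>/2) < N" using reals_Archimedean2 by blast
    show "\<exists>N. \<forall>n\<ge>N. norm (e n / real n - L) < \<epsilon>"
    proof (intro exI allI impI)
      fix n assume n: "n \<ge> max 1 N"
      have "e n \<le> real (n div k) * e k + e (n mod k)"
        using subadditive_mult_add_le[of e "n div k" k "n mod k", OF subadd] by simp
      also have "e (n mod k) \<le> M"
        unfolding M_def by (rule member_le_sum) (use k nonneg in auto)
      also have "real (n div k) * e k \<le> real n / real k * e k"
        by (rule mult_right_mono) (use nonneg of_nat_div_le_of_nat in auto)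
      finally have "e n / real n \<le> (real n / real k * e k + M) / real n"
        using n by (simp add: divide_right_mono)
      also have "\<dots> = e k / real k + M / real n" using n by (simp add: field_simps)
      finally have upper: "e n / real n \<le> e k / real k + M / real n" .
      have "M < \<epsilon>/2 * real N" using N \<open>\<epsilon> > 0\<close> by (simp add: field_simps)
      also have "\<dots> \<le> \<epsilon>/2 * real n" using n \<open>\<epsilon> > 0\<close> by simp
      finally have "M / real n < \<epsilon>/2" using n by (simp add: field_simps)
      then have "0 \<le> e n / real n - L" "e n / real n - L < \<epsilon>"
        using upper k(2) L_le[of n] n by linarith+
      then show "norm (e n / real n - L) < \<epsilon>" by simp
    qed
  qed
  then show ?thesis unfolding convergent_def by blast
qed

lemma bij_betw_Pow_lessThan_add:
  fixes n m :: nat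
  shows "bij_betw (\<lambda>(A, B). A \<union> (+) n ` B) (Pow {..<n} \<times> Pow {..<m}) (Pow {..<n + m})"
proof (rule bij_betw_byWitness[where f' = "\<lambda>S. (S \<inter> {..<n}, {i. n + i \<in> S})"])
  have "S \<inter> {..<n} \<union> (+) n ` {i. n + i \<in> S} = S" for S :: "nat set"
    by (auto simp: image_iff) (metis le_add_diff_inverse not_less)
  then show "\<forall>S\<in>Pow {..<n + m}. (\<lambda>(A, B). A \<union> (+) n ` B) (S \<inter> {..<n}, {i. n + i \<in> S}) = S"
    by simp
qed (auto simp: image_iff)


subsection \<open>Set functions on finite sets of times\<close>

locale shift_subadditive =
  fixes a :: "nat set \<Rightarrow> real"
  assumes nonneg: "0 \<le> a S"
    and mono: "finite B \<Longrightarrow> A \<subseteq> B \<Longrightarrow> a A \<le> a B"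
    and subadditive: "finite A \<Longrightarrow> finite B \<Longrightarrow> A \<inter> B = {} \<Longrightarrow> a (A \<union> B) \<le> a A + a B"
    and shift: "finite S \<Longrightarrow> a ((+) n ` S) \<le> a S"
begin

definition total :: "nat \<Rightarrow> real" where
  "total n = (\<Sum>S\<in>Pow {..<n}. a S)"

definition total_through_zero :: "nat \<Rightarrow> real" where
  "total_through_zero n = (\<Sum>S\<in>{S. S \<subseteq> {..<n} \<and> 0 \<in> S}. a S)"

lemma total_add_le: "total (n + m) \<le> 2 ^ m * total n + 2 ^ n * total m"
proof -
  let ?P = "Pow {..<n} \<times> Pow {..<m}"
  have "total (n + m) = (\<Sum>(A, B)\<in>?P. a (A \<union> (+) n ` B))"
    unfolding total_def using sum.reindex_bij_betw[OF bij_betw_Pow_lessThan_add, symmetric]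
    by (simp add: case_prod_unfold)
  also have "\<dots> \<le> (\<Sum>(A, B)\<in>?P. a A + a B)"
  proof (rule sum_mono, clarify)
    fix A B assume "A \<subseteq> {..<n}" "B \<subseteq> {..<m}"
    then have "finite A" "finite B" "A \<inter> (+) n ` B = {}"
      by (auto intro: finite_subset)
    then have "a (A \<union> (+) n ` B) \<le> a A + a ((+) n ` B)" by (intro subadditive) auto
    also have "\<dots> \<le> a A + a B" using shift[OF \<open>finite B\<close>] by simp
    finally show "a (A \<union> (+) n ` B) \<le> a A + a B" .
  qed
  also have "\<dots> = (\<Sum>A\<in>Pow {..<n}. \<Sum>B\<in>Pow {..<m}. a A) + (\<Sum>A\<in>Pow {..<n}. \<Sum>B\<in>Pow {..<m}. a B)"
    by (simp add: sum.cartesian_product' case_prod_unfold sum.distrib)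
  also have "\<dots> = 2 ^ m * total n + 2 ^ n * total m"
    by (simp add: total_def card_Pow sum_distrib_left)
  finally show ?thesis .
qed

lemma halved_total_subadditive:
  "(1/2) ^ (n + m) * total (n + m) \<le> (1/2) ^ n * total n + (1/2) ^ m * total m"
proof -
  have "(1/2) ^ (n + m) * total (n + m) \<le> (1/2) ^ (n + m) * (2 ^ m * total n + 2 ^ n * total m)"
    by (rule mult_left_mono[OF total_add_le]) simp
  also have "\<dots> = (1/2) ^ n * total n + (1/2) ^ m * total m"
    by (simp add: power_add field_simps)
  finally show ?thesis .
qed

lemma total_through_zero_bounds:
  assumes "n > 0"
  shows "total n \<le> 2 * total_through_zero n" and "2 * total_through_zero n \<le> total n + 2 ^ n * a {0}"
proof -
  let ?A = "{S. S \<subseteq> {..<n} \<and> 0 \<in> S}" and ?B = "{S. S \<subseteq> {..<n} \<and> 0 \<notin> S}"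
  have "finite ?A" "finite ?B" by (auto intro: finite_subset[of _ "Pow {..<n}"])
  then have "(\<Sum>S\<in>?A \<union> ?B. a S) = total_through_zero n + (\<Sum>S\<in>?B. a S)"
    unfolding total_through_zero_def by (rule sum.union_disjoint) auto
  moreover have "total n = (\<Sum>S\<in>?A \<union> ?B. a S)" unfolding total_def by (intro sum.cong) auto
  ultimately have total_eq: "total n = total_through_zero n + (\<Sum>S\<in>?B. a S)" by simp
  have through_zero_eq: "total_through_zero n = (\<Sum>S\<in>?B. a (insert 0 S))"
    unfolding total_through_zero_def
    by (rule sum.reindex_bij_witness[where i = "insert 0" and j = "\<lambda>S. S - {0}"])
       (use assms in \<open>auto simp: insert_absorb\<close>)
  have finite_B: "finite S" if "S \<in> ?B" for S using that finite_subset by blast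
  have "(\<Sum>S\<in>?B. a S) \<le> total_through_zero n"
    unfolding through_zero_eq by (intro sum_mono mono) (use finite_B in auto)
  then show "total n \<le> 2 * total_through_zero n" using total_eq by simp
  have "total_through_zero n \<le> (\<Sum>S\<in>?B. a S + a {0})"
    unfolding through_zero_eq
  proof (rule sum_mono)
    fix S assume "S \<in> ?B"
    then show "a (insert 0 S) \<le> a S + a {0}"
      using subadditive[of "{0}" S] finite_B by (simp add: add.commute)
  qed
  also have "\<dots> \<le> (\<Sum>S\<in>?B. a S) + 2 ^ n * a {0}"
  proof -
    have "card ?B \<le> card (Pow {..<n})" by (rule card_mono) auto
    then have "real (card ?B) * a {0} \<le> 2 ^ n * a {0}"
      by (intro mult_right_mono nonneg) (simp_all add: card_Pow)
    then show ?thesis by (simp add: sum.distrib)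
  qed
  finally show "2 * total_through_zero n \<le> total n + 2 ^ n * a {0}" using total_eq by simp
qed

lemma total_through_zero_half_limit:
  obtains L where "(\<lambda>n. (1/2) ^ n * total n / real n) \<longlonglongrightarrow> L"
    and "(\<lambda>n. (1/2) ^ n * total_through_zero n / real n) \<longlonglongrightarrow> L / 2"
proof -
  define r where "r n = (1/2) ^ n * total n / real n" for n
  define s where "s n = (1/2) ^ n * total_through_zero n / real n" for n
  have "convergent r"
    unfolding r_def
    by (rule fekete_convergent[of "\<lambda>n. (1/2) ^ n * total n", OF _ halved_total_subadditive])
       (simp add: total_def sum_nonneg nonneg)
  then obtain L where r: "r \<longlonglongrightarrow> L" unfolding convergent_def by blast
  have error_bounds: "0 \<le> 2 * s n - r n \<and> 2 * s n - r n \<le> a {0} / real n" for n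
  proof (cases "n = 0")
    case False
    define \<delta> where "\<delta> = (1/2) ^ n * (2 * total_through_zero n - total n)"
    have "2 * s n - r n = \<delta> / real n"
      by (simp add: \<delta>_def r_def s_def diff_divide_distrib right_diff_distrib)
    moreover have "0 \<le> \<delta>" using total_through_zero_bounds(1)[of n] False by (simp add: \<delta>_def)
    moreover have "\<delta> \<le> (1/2) ^ n * (2 ^ n * a {0})"
      unfolding \<delta>_def using total_through_zero_bounds(2)[of n] False by (intro mult_left_mono) simp_all
    ultimately show ?thesis by (simp add: divide_right_mono power_one_over)
  qed (simp add: r_def s_def)
  have "(\<lambda>n. 2 * s n - r n) \<longlonglongrightarrow> 0"
    by (rule tendsto_sandwich[OF _ _ tendsto_const lim_const_over_n[of "a {0}"]]) (use error_bounds in auto)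
  then have "(\<lambda>n. (r n + (2 * s n - r n)) / 2) \<longlonglongrightarrow> (L + 0) / 2"
    using r by (intro tendsto_intros) auto
  then have "s \<longlonglongrightarrow> L / 2" by simp
  with r show ?thesis unfolding r_def s_def by (rule that)
qed

end


subsection \<open>Minimal subcovers of iterated joins\<close>

definition has_finite_subcover :: "'a topology \<Rightarrow> 'a set set \<Rightarrow> bool" where
  "has_finite_subcover X V \<longleftrightarrow> (\<exists>W\<subseteq>V. finite W \<and> \<Union>W = topspace X)"

lemma cover_num_le:
  assumes "W \<subseteq> V" "finite W" "\<Union>W = topspace X"
  shows "cover_num X V \<le> card W"
  unfolding cover_num_def by (rule Least_le) (use assms in blast)

lemma obtain_minimal_subcover:
  assumes "has_finite_subcover X V"
  obtains W where "W \<subseteq> V" "finite W" "card W = cover_num X V" "\<Union>W = topspace X"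
proof -
  have "\<exists>k. \<exists>W\<subseteq>V. finite W \<and> card W = k \<and> \<Union>W = topspace X"
    using assms unfolding has_finite_subcover_def by blast
  then have "\<exists>W\<subseteq>V. finite W \<and> card W = cover_num X V \<and> \<Union>W = topspace X"
    unfolding cover_num_def by (rule LeastI_ex)
  with that show ?thesis by blast
qed

lemma cover_num_image_le:
  assumes "finite W" "g ` W \<subseteq> V" "\<Union>(g ` W) = topspace X"
  shows "has_finite_subcover X V" and "cover_num X V \<le> card W"
proof -
  show "has_finite_subcover X V" unfolding has_finite_subcover_def using assms by blast
  have "cover_num X V \<le> card (g ` W)" using assms by (intro cover_num_le) auto
  also have "\<dots> \<le> card W" using assms(1) by (rule card_image_le)
  finally show "cover_num X V \<le> card W" .
qed

lemma cover_num_refinement_le: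
  assumes "has_finite_subcover X V" "\<And>v. v \<in> V \<Longrightarrow> \<exists>v'\<in>V'. v \<subseteq> v'" "\<Union>V' \<subseteq> topspace X"
  shows "has_finite_subcover X V'" and "cover_num X V' \<le> cover_num X V"
proof -
  obtain W where W: "W \<subseteq> V" "finite W" "card W = cover_num X V" "\<Union>W = topspace X"
    using obtain_minimal_subcover[OF assms(1)] .
  define g where "g v = (SOME v'. v' \<in> V' \<and> v \<subseteq> v')" for v
  have g: "g v \<in> V' \<and> v \<subseteq> g v" if "v \<in> W" for v
    unfolding g_def using assms(2) W(1) that by (metis (mono_tags, lifting) someI_ex subsetD)
  have "g ` W \<subseteq> V'" using g by auto
  moreover have "\<Union>(g ` W) = topspace X"
  proof
    show "\<Union>(g ` W) \<subseteq> topspace X" using \<open>g ` W \<subseteq> V'\<close> assms(3) by auto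
    show "topspace X \<subseteq> \<Union>(g ` W)" using g W(4) by blast
  qed
  ultimately show "has_finite_subcover X V'" "cover_num X V' \<le> cover_num X V"
    using cover_num_image_le[OF W(2)] W(3) by auto
qed

lemma join_cover_mono:
  assumes "A \<subseteq> B" "has_finite_subcover X (join_cover X T U B)"
  shows "has_finite_subcover X (join_cover X T U A)"
    and "cover_num X (join_cover X T U A) \<le> cover_num X (join_cover X T U B)"
proof -
  have refines: "\<exists>v'\<in>join_cover X T U A. v \<subseteq> v'" if v: "v \<in> join_cover X T U B" for v
  proof -
    obtain f where f: "\<forall>i\<in>B. f i \<in> U" "v = topspace X \<inter> (\<Inter>i\<in>B. iter_preimage X T i (f i))"
      using v unfolding join_cover_def by blast
    then have "topspace X \<inter> (\<Inter>i\<in>A. iter_preimage X T i (f i)) \<in> join_cover X T U A"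
      unfolding join_cover_def using assms(1) by blast
    moreover have "v \<subseteq> topspace X \<inter> (\<Inter>i\<in>A. iter_preimage X T i (f i))"
      unfolding f(2) using assms(1) by blast
    ultimately show ?thesis by blast
  qed
  have "\<Union>(join_cover X T U A) \<subseteq> topspace X" by (auto simp: join_cover_def)
  then show "has_finite_subcover X (join_cover X T U A)"
    "cover_num X (join_cover X T U A) \<le> cover_num X (join_cover X T U B)"
    using cover_num_refinement_le[OF assms(2) refines] by auto
qed

lemma join_cover_shift:
  assumes T: "T \<in> topspace X \<rightarrow> topspace X" and "has_finite_subcover X (join_cover X T U S)"
  shows "has_finite_subcover X (join_cover X T U ((+) n ` S))"
    and "cover_num X (join_cover X T U ((+) n ` S)) \<le> cover_num X (join_cover X T U S)"
proof -
  have T_iter: "(T ^^ n) x \<in> topspace X" if "x \<in> topspace X" for x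
    using that T by (induction n) auto
  obtain W where W: "W \<subseteq> join_cover X T U S" "finite W" "card W = cover_num X (join_cover X T U S)"
    "\<Union>W = topspace X"
    using obtain_minimal_subcover[OF assms(2)] .
  define h where "h w = iter_preimage X T n w" for w
  have "h ` W \<subseteq> join_cover X T U ((+) n ` S)"
  proof
    fix v assume "v \<in> h ` W"
    then obtain w f where v: "v = h w" and f: "\<forall>i\<in>S. f i \<in> U"
      "w = topspace X \<inter> (\<Inter>i\<in>S. iter_preimage X T i (f i))"
      using W(1) unfolding join_cover_def by blast
    have "v = topspace X \<inter> (\<Inter>j\<in>(+) n ` S. iter_preimage X T j (f (j - n)))"
      unfolding v h_def f(2) iter_preimage_def using T_iter
      by (auto simp: funpow_add[of _ n, unfolded add.commute[of _ n]])
    then show "v \<in> join_cover X T U ((+) n ` S)"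
      unfolding join_cover_def using f(1) by (intro CollectI exI[of _ "\<lambda>j. f (j - n)"]) auto
  qed
  moreover have "\<Union>(h ` W) = topspace X"
  proof
    show "\<Union>(h ` W) \<subseteq> topspace X" by (auto simp: h_def iter_preimage_def)
    show "topspace X \<subseteq> \<Union>(h ` W)"
    proof
      fix x assume "x \<in> topspace X"
      then have "(T ^^ n) x \<in> \<Union>W" using W(4) T_iter by simp
      then obtain w where "w \<in> W" "(T ^^ n) x \<in> w" by blast
      with \<open>x \<in> topspace X\<close> show "x \<in> \<Union>(h ` W)" by (auto simp: h_def iter_preimage_def)
    qed
  qed
  ultimately show "has_finite_subcover X (join_cover X T U ((+) n ` S))"
    "cover_num X (join_cover X T U ((+) n ` S)) \<le> cover_num X (join_cover X T U S)"
    using cover_num_image_le[OF W(2)] W(3) by auto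
qed

lemma join_cover_Un:
  assumes "A \<inter> B = {}" "has_finite_subcover X (join_cover X T U A)"
    "has_finite_subcover X (join_cover X T U B)"
  shows "has_finite_subcover X (join_cover X T U (A \<union> B))"
    and "cover_num X (join_cover X T U (A \<union> B))
           \<le> cover_num X (join_cover X T U A) * cover_num X (join_cover X T U B)"
proof -
  obtain W1 where W1: "W1 \<subseteq> join_cover X T U A" "finite W1"
    "card W1 = cover_num X (join_cover X T U A)" "\<Union>W1 = topspace X"
    using obtain_minimal_subcover[OF assms(2)] .
  obtain W2 where W2: "W2 \<subseteq> join_cover X T U B" "finite W2"
    "card W2 = cover_num X (join_cover X T U B)" "\<Union>W2 = topspace X"
    using obtain_minimal_subcover[OF assms(3)] .
  define V where "V = (\<lambda>(v, w). v \<inter> w) ` (W1 \<times> W2)"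
  have "V \<subseteq> join_cover X T U (A \<union> B)"
  proof
    fix u assume "u \<in> V"
    then obtain v w where v: "v \<in> W1" and w: "w \<in> W2" and u: "u = v \<inter> w" unfolding V_def by blast
    obtain f where f: "\<forall>i\<in>A. f i \<in> U" "v = topspace X \<inter> (\<Inter>i\<in>A. iter_preimage X T i (f i))"
      using W1(1) v unfolding join_cover_def by blast
    obtain g where g: "\<forall>i\<in>B. g i \<in> U" "w = topspace X \<inter> (\<Inter>i\<in>B. iter_preimage X T i (g i))"
      using W2(1) w unfolding join_cover_def by blast
    define h where "h i = (if i \<in> A then f i else g i)" for i
    have h_A: "(\<Inter>i\<in>A. iter_preimage X T i (h i)) = (\<Inter>i\<in>A. iter_preimage X T i (f i))"
      by (simp add: h_def)
    have h_B: "(\<Inter>i\<in>B. iter_preimage X T i (h i)) = (\<Inter>i\<in>B. iter_preimage X T i (g i))"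
      by (rule INF_cong) (use assms(1) in \<open>auto simp: h_def\<close>)
    have "u = topspace X \<inter> (\<Inter>i\<in>A \<union> B. iter_preimage X T i (h i))"
      unfolding u f(2) g(2) INT_Un h_A h_B by auto
    then show "u \<in> join_cover X T U (A \<union> B)"
      unfolding join_cover_def using f(1) g(1) by (intro CollectI exI[of _ h]) (auto simp: h_def)
  qed
  moreover have "\<Union>V = topspace X"
  proof
    show "\<Union>V \<subseteq> topspace X" using W1(4) unfolding V_def by auto
    show "topspace X \<subseteq> \<Union>V"
    proof
      fix x assume "x \<in> topspace X"
      then have "x \<in> \<Union>W1" "x \<in> \<Union>W2" using W1(4) W2(4) by simp_all
      then obtain v w where "v \<in> W1" "w \<in> W2" "x \<in> v \<inter> w" by blast
      then show "x \<in> \<Union>V" unfolding V_def by blast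
    qed
  qed
  ultimately show "has_finite_subcover X (join_cover X T U (A \<union> B))"
    "cover_num X (join_cover X T U (A \<union> B))
       \<le> cover_num X (join_cover X T U A) * cover_num X (join_cover X T U B)"
    using cover_num_image_le[of "W1 \<times> W2"] W1(2,3) W2(2,3) unfolding V_def
    by (auto simp: card_cartesian_product)
qed

lemma has_finite_subcover_join_cover_empty: "has_finite_subcover X (join_cover X T U {})"
proof -
  have "join_cover X T U {} = {topspace X}" unfolding join_cover_def by auto
  then show ?thesis by (auto simp: has_finite_subcover_def)
qed

lemma has_finite_subcover_join_cover_0:
  assumes "compact_space X" "open_cover X U"
  shows "has_finite_subcover X (join_cover X T U {0})"
proof -
  obtain F where F: "finite F" "F \<subseteq> U" "topspace X \<subseteq> \<Union>F"
    using assms unfolding compact_space_def compactin_def open_cover_def by metis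
  have "(\<lambda>g. topspace X \<inter> g) ` F \<subseteq> join_cover X T U {0}"
    using F(2) unfolding join_cover_def iter_preimage_def by force
  moreover have "\<Union>((\<lambda>g. topspace X \<inter> g) ` F) = topspace X" using F(3) by blast
  ultimately show ?thesis by (rule cover_num_image_le(1)[OF F(1)])
qed

lemma has_finite_subcover_join_cover:
  assumes "compact_space X" "open_cover X U" "T \<in> topspace X \<rightarrow> topspace X" "finite S"
  shows "has_finite_subcover X (join_cover X T U S)"
  using assms(4)
proof (induction S rule: finite_induct)
  case (insert k S)
  have "has_finite_subcover X (join_cover X T U ((+) k ` {0}))"
    by (rule join_cover_shift(1)[OF assms(3) has_finite_subcover_join_cover_0[OF assms(1,2)]])
  then show ?case using join_cover_Un(1)[of "{k}" S] insert by auto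
qed (rule has_finite_subcover_join_cover_empty)

lemma ln_of_nat_nonneg: "0 \<le> ln (real (k::nat))"
  by (cases "k = 0") auto

lemma ln_of_nat_mono: "(k::nat) \<le> m \<Longrightarrow> ln (real k) \<le> ln (real m)"
  by (cases "k = 0") (auto simp: ln_of_nat_nonneg)

lemma ln_of_nat_le_add_of_le_mult:
  assumes "(k::nat) \<le> p * q" shows "ln (real k) \<le> ln (real p) + ln (real q)"
proof (cases "k = 0")
  case False
  then have "p > 0" "q > 0" using assms by (auto intro!: gr0I)
  then show ?thesis using ln_of_nat_mono[OF assms] by (simp add: ln_mult)
qed (simp add: ln_of_nat_nonneg)

lemma shift_subadditive_log_cover_num:
  assumes "compact_space X" "open_cover X U" "T \<in> topspace X \<rightarrow> topspace X"
  shows "shift_subadditive (\<lambda>S. ln (real (cover_num X (join_cover X T U S))))"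
proof
  note finite_subcover = has_finite_subcover_join_cover[OF assms]
  show "0 \<le> ln (real (cover_num X (join_cover X T U S)))" for S
    by (rule ln_of_nat_nonneg)
  show "ln (real (cover_num X (join_cover X T U A))) \<le> ln (real (cover_num X (join_cover X T U B)))"
    if "finite B" "A \<subseteq> B" for A B
    using join_cover_mono(2)[OF that(2) finite_subcover[OF that(1)]] by (rule ln_of_nat_mono)
  show "ln (real (cover_num X (join_cover X T U (A \<union> B))))
     \<le> ln (real (cover_num X (join_cover X T U A))) + ln (real (cover_num X (join_cover X T U B)))"
    if "finite A" "finite B" "A \<inter> B = {}" for A B
    using join_cover_Un(2)[OF that(3) finite_subcover[OF that(1)] finite_subcover[OF that(2)]]
    by (rule ln_of_nat_le_add_of_le_mult)
  show "ln (real (cover_num X (join_cover X T U ((+) n ` S))))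
     \<le> ln (real (cover_num X (join_cover X T U S)))" if "finite S" for S n
    using join_cover_shift(2)[OF assms(3) finite_subcover[OF that]] by (rule ln_of_nat_mono)
qed

theorem proposition2p5:
  fixes X :: "'a topology" and T :: "'a \<Rightarrow> 'a" and U :: "'a set set"
    and c :: "nat \<Rightarrow> nat set \<Rightarrow> real"
  assumes "compact_space X" and "Hausdorff_space X" and "continuous_map X X T"
    and "\<And>n S. c n S = (1/2) ^ n"
    and "open_cover X U"
  shows "convergent (asc_seq c X T U) \<and> convergent (acc_seq c X T U)
         \<and> Acc c X T U = (1/2) * Asc c X T U"
proof -
  interpret shift_subadditive "\<lambda>S. ln (real (cover_num X (join_cover X T U S)))"
    using shift_subadditive_log_cover_num[OF assms(1,5) continuous_map_funspace[OF assms(3)]] .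
  obtain L where "(\<lambda>n. (1/2) ^ n * total n / real n) \<longlonglongrightarrow> L"
    and "(\<lambda>n. (1/2) ^ n * total_through_zero n / real n) \<longlonglongrightarrow> L / 2"
    by (rule total_through_zero_half_limit)
  moreover have "asc_seq c X T U = (\<lambda>n. (1/2) ^ n * total n / real n)"
    and "acc_seq c X T U = (\<lambda>n. (1/2) ^ n * total_through_zero n / real n)"
    by (simp_all add: fun_eq_iff asc_seq_def acc_seq_def assms(4) total_def total_through_zero_def
        sum_distrib_left sum_divide_distrib)
  ultimately have "asc_seq c X T U \<longlonglongrightarrow> L" and "acc_seq c X T U \<longlonglongrightarrow> L / 2" by simp_all
  then show ?thesis unfolding Acc_def Asc_def convergent_def by (auto simp: limI)
qed

end
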